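(* For $n\ge 0$ and $k\ge0$, let $LO_k(n)$ be the number of saturated 2-regular simple stacks on $[n]$ with exactly $\lfloor (n-1)/2\rfloor-k$ arcs. Then for every $n\ge 3$, \[ LO_1(n)=\begin{cases} \dfrac{(n-1) (n-3) }{192}(n^{2}+8 n+31), & n \text{ odd},\\[6pt] \dfrac{(n-2) (n-4) }{9216}(n^{4}+12 n^{3}+68 n^{2}-288 n-2304), & n\text{ even}, \end{cases} \] and \[ LO_2(n)=\begin{cases} \dfrac{(n-3)(n-5)(n-7)}{737280}\left(n^{5}+23 n^{4}+278 n^{3}+634 n^{2}-9879 n-52497\right), & n\text{ odd},\\[6pt] \dfrac{(n-4)(n-6)(n-8)}{88473600}\big(n^{7}+28 n^{6}+400 n^{5}-560 n^{4}-56336 n^{3}-320768 n^{2}\\ \qquad\qquad+1555200 n+13363200\big), & n\text{ even}. \end{cases} \]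
   Context: A 2-regular simple stack on $[n]$ is a simple graph on vertices $1,\dots,n$ (drawn on a line) whose arcs $(i,j)$, $i<j$, satisfy $j-i\ge 2$, no two arcs $(i,j),(k,l)$ satisfy $i<k<j<l$ (noncrossing), and every vertex has degree at most 1. It is saturated if no arc can be added keeping these properties. The maximum number of arcs of a 2-regular simple stack on $[n]$ is $\lfloor (n-1)/2\rfloor$; a $k$-saturated stack is a saturated one with exactly $k$ fewer arcs than this maximum, so $LO_k(n)$ counts $k$-saturated 2-regular simple stacks on $[n]$. *)

theory Defs
  imports Complex_Main
begin

definition stack2 :: "nat \<Rightarrow> (nat \<times> nat) set \<Rightarrow> bool" where
  "stack2 n A \<longleftrightarrow>
     A \<subseteq> {(i,j). 1 \<le> i \<and> i < j \<and> j \<le> n \<and> i + 2 \<le> j} \<and>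
     (\<forall>(i,j)\<in>A. \<forall>(k,l)\<in>A. \<not> (i < k \<and> k < j \<and> j < l)) \<and>
     (\<forall>(i,j)\<in>A. \<forall>(k,l)\<in>A. (i,j) \<noteq> (k,l) \<longrightarrow> {i,j} \<inter> {k,l} = {})"

definition saturated2 :: "nat \<Rightarrow> (nat \<times> nat) set \<Rightarrow> bool" where
  "saturated2 n A \<longleftrightarrow> stack2 n A \<and> (\<forall>e. e \<notin> A \<longrightarrow> \<not> stack2 n (insert e A))"

definition LO :: "nat \<Rightarrow> nat \<Rightarrow> nat" where
  "LO k n = card {A. saturated2 n A \<and> card A + k = (n - 1) div 2}"

end

theory Submission
  imports Defs "HOL-Computational_Algebra.Formal_Power_Series"
begin

text \<open>
  A saturated stack is classified by its leftmost vertex. If that vertex is matched to j, the arc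
  splits the stack into two independent saturated stacks, one under the arc and one to the right
  of j. If it is free, every free vertex v beyond the next vertex must lie under an arc, since
  otherwise the arc to v could be added; so from the next vertex on (or from the one after it, if
  the next vertex is free as well) we see a saturated stack all of whose free vertices are covered.
  Let A_u and E_u be the generating functions, by number of arcs, of saturated stacks with u free
  vertices and of those among them whose free vertices are all covered. Then A_0 = E_0 = 1 and,
  for u >= 1,

    A_u = E_(u-1) + [u >= 2] E_(u-2) + X (A_1 A_(u-1) + ... + A_u A_0),
    E_u = X (A_1 E_(u-1) + ... + A_u E_0).

  Solving these linear equations for u <= 6 makes every A_u a polynomial in 1/(1 - X), whose
  coefficients are sums of binomial coefficients, hence polynomials in the number of arcs.
  A saturated stack on [n] with floor((n-1)/2) - k arcs has 2k + 1 or 2k + 2 free vertices, so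
  LO_1 and LO_2 are coefficients of A_3, ..., A_6.
\<close>

(* Vertices form the half-open interval lo, ..., hi - 1, so that cutting at an arc gives
   intervals of the same shape. *)
definition arcs_within :: "nat \<Rightarrow> nat \<Rightarrow> (nat \<times> nat) set \<Rightarrow> bool" where
  "arcs_within lo hi A \<longleftrightarrow> (\<forall>(i, j)\<in>A. lo \<le> i \<and> i + 2 \<le> j \<and> j < hi)"

definition stack :: "nat \<Rightarrow> nat \<Rightarrow> (nat \<times> nat) set \<Rightarrow> bool" where
  "stack lo hi A \<longleftrightarrow> arcs_within lo hi A \<and>
     (\<forall>(i, j)\<in>A. \<forall>(k, l)\<in>A. \<not> (i < k \<and> k < j \<and> j < l)) \<and>
     (\<forall>(i, j)\<in>A. \<forall>(k, l)\<in>A. (i, j) \<noteq> (k, l) \<longrightarrow> i \<noteq> k \<and> i \<noteq> l \<and> j \<noteq> k \<and> j \<noteq> l)"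

definition matched :: "(nat \<times> nat) set \<Rightarrow> nat \<Rightarrow> bool" where
  "matched A v \<longleftrightarrow> (\<exists>(i, j)\<in>A. v = i \<or> v = j)"

definition covered :: "(nat \<times> nat) set \<Rightarrow> nat \<Rightarrow> bool" where
  "covered A v \<longleftrightarrow> (\<exists>(i, j)\<in>A. i < v \<and> v < j)"

definition crosses :: "(nat \<times> nat) set \<Rightarrow> nat \<Rightarrow> nat \<Rightarrow> bool" where
  "crosses A i j \<longleftrightarrow> (\<exists>k l. (k, l) \<in> A \<and> (i < k \<and> k < j \<and> j < l \<or> k < i \<and> i < l \<and> l < j))"

definition saturated :: "nat \<Rightarrow> nat \<Rightarrow> (nat \<times> nat) set \<Rightarrow> bool" where
  "saturated lo hi A \<longleftrightarrow> stack lo hi A \<and>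
     (\<forall>i j. lo \<le> i \<longrightarrow> i + 2 \<le> j \<longrightarrow> j < hi \<longrightarrow> \<not> matched A i \<longrightarrow> \<not> matched A j \<longrightarrow> crosses A i j)"

definition unmatched_covered :: "nat \<Rightarrow> nat \<Rightarrow> (nat \<times> nat) set \<Rightarrow> bool" where
  "unmatched_covered lo hi A \<longleftrightarrow> (\<forall>v. lo \<le> v \<longrightarrow> v < hi \<longrightarrow> \<not> matched A v \<longrightarrow> covered A v)"

lemma arcs_withinD: "arcs_within lo hi A \<Longrightarrow> (i, j) \<in> A \<Longrightarrow> lo \<le> i \<and> i + 2 \<le> j \<and> j < hi"
  unfolding arcs_within_def by blast

lemma arcs_withinI:
  "(\<And>i j. (i, j) \<in> A \<Longrightarrow> lo \<le> i \<and> i + 2 \<le> j \<and> j < hi) \<Longrightarrow> arcs_within lo hi A"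
  unfolding arcs_within_def by blast

lemma arcs_within_mono: "arcs_within lo hi A \<Longrightarrow> lo' \<le> lo \<Longrightarrow> hi \<le> hi' \<Longrightarrow> arcs_within lo' hi' A"
  unfolding arcs_within_def by fastforce

lemma finite_arcs_within: "arcs_within lo hi A \<Longrightarrow> finite A"
  by (rule finite_subset[of _ "{lo..<hi} \<times> {lo..<hi}"]) (auto dest: arcs_withinD)

lemma stack_arcs_within: "stack lo hi A \<Longrightarrow> arcs_within lo hi A"
  unfolding stack_def by blast

lemma stack_arcD: "stack lo hi A \<Longrightarrow> (i, j) \<in> A \<Longrightarrow> lo \<le> i \<and> i + 2 \<le> j \<and> j < hi"
  unfolding stack_def arcs_within_def by blast

lemma stack_noncrossing: "stack lo hi A \<Longrightarrow> (i, j) \<in> A \<Longrightarrow> (k, l) \<in> A \<Longrightarrow> \<not> (i < k \<and> k < j \<and> j < l)"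
  unfolding stack_def by blast

lemma stack_disjoint:
  "stack lo hi A \<Longrightarrow> (i, j) \<in> A \<Longrightarrow> (k, l) \<in> A \<Longrightarrow> (i, j) \<noteq> (k, l) \<Longrightarrow> i \<noteq> k \<and> i \<noteq> l \<and> j \<noteq> k \<and> j \<noteq> l"
  unfolding stack_def by blast

lemma stackI:
  assumes "arcs_within lo hi A"
    and "\<And>i j k l. (i, j) \<in> A \<Longrightarrow> (k, l) \<in> A \<Longrightarrow> \<not> (i < k \<and> k < j \<and> j < l)"
    and "\<And>i j k l. (i, j) \<in> A \<Longrightarrow> (k, l) \<in> A \<Longrightarrow> (i, j) \<noteq> (k, l) \<Longrightarrow> i \<noteq> k \<and> i \<noteq> l \<and> j \<noteq> k \<and> j \<noteq> l"
  shows "stack lo hi A"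
  unfolding stack_def using assms by fast

lemma stack_subset: "stack lo hi B \<Longrightarrow> A \<subseteq> B \<Longrightarrow> arcs_within lo' hi' A \<Longrightarrow> stack lo' hi' A"
  by (rule stackI) (auto dest: stack_noncrossing stack_disjoint)

lemma finite_stacks: "finite {A. stack lo hi A}"
proof (rule finite_subset)
  show "{A. stack lo hi A} \<subseteq> Pow ({lo..<hi} \<times> {lo..<hi})"
    by (auto dest: stack_arcD)
qed simp

lemma stack_card_le:
  assumes "stack lo hi A"
  shows "2 * card A \<le> hi - lo"
proof -
  have fin: "finite A" using finite_arcs_within[OF stack_arcs_within[OF assms]] .
  have "inj_on fst A" "inj_on snd A"
    unfolding inj_on_def using stack_disjoint[OF assms] by fastforce+
  moreover have "fst ` A \<inter> snd ` A = {}"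
    using stack_disjoint[OF assms] stack_arcD[OF assms] by fastforce
  ultimately have "card (fst ` A \<union> snd ` A) = 2 * card A"
    by (simp add: card_Un_disjoint card_image fin)
  moreover have "fst ` A \<union> snd ` A \<subseteq> {lo..<hi}"
    using stack_arcD[OF assms] by fastforce
  ultimately show ?thesis
    by (metis card_atLeastLessThan card_mono finite_atLeastLessThan)
qed

lemma matched_insert [simp]: "matched (insert (i, j) A) v \<longleftrightarrow> v = i \<or> v = j \<or> matched A v"
  unfolding matched_def by auto

lemma matched_Un [simp]: "matched (A \<union> B) v \<longleftrightarrow> matched A v \<or> matched B v"
  unfolding matched_def by auto

lemma covered_insert [simp]: "covered (insert (i, j) A) v \<longleftrightarrow> i < v \<and> v < j \<or> covered A v"
  unfolding covered_def by auto

lemma covered_Un [simp]: "covered (A \<union> B) v \<longleftrightarrow> covered A v \<or> covered B v"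
  unfolding covered_def by auto

lemma crosses_insert [simp]:
  "crosses (insert (k, l) A) i j \<longleftrightarrow> i < k \<and> k < j \<and> j < l \<or> k < i \<and> i < l \<and> l < j \<or> crosses A i j"
  unfolding crosses_def by auto

lemma crosses_Un [simp]: "crosses (A \<union> B) i j \<longleftrightarrow> crosses A i j \<or> crosses B i j"
  unfolding crosses_def by auto

lemma matched_arcs_within: "arcs_within lo hi A \<Longrightarrow> matched A v \<Longrightarrow> lo \<le> v \<and> v < hi"
  unfolding matched_def by (fastforce dest: arcs_withinD)

lemma covered_arcs_within: "arcs_within lo hi A \<Longrightarrow> covered A v \<Longrightarrow> lo < v \<and> Suc v < hi"
  unfolding covered_def by (fastforce dest: arcs_withinD)

lemma crosses_arcs_within: "arcs_within lo hi A \<Longrightarrow> crosses A i j \<Longrightarrow> lo < j \<and> i < hi"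
  unfolding crosses_def by (fastforce dest: arcs_withinD)

lemma saturatedI:
  "stack lo hi A \<Longrightarrow>
   (\<And>i j. lo \<le> i \<Longrightarrow> i + 2 \<le> j \<Longrightarrow> j < hi \<Longrightarrow> \<not> matched A i \<Longrightarrow> \<not> matched A j \<Longrightarrow> crosses A i j) \<Longrightarrow>
   saturated lo hi A"
  unfolding saturated_def by blast

lemma saturatedD:
  "saturated lo hi A \<Longrightarrow> lo \<le> i \<Longrightarrow> i + 2 \<le> j \<Longrightarrow> j < hi \<Longrightarrow> \<not> matched A i \<Longrightarrow> \<not> matched A j \<Longrightarrow>
   crosses A i j"
  unfolding saturated_def by blast

lemma saturated_stack: "saturated lo hi A \<Longrightarrow> stack lo hi A"
  unfolding saturated_def by blast

lemma stack2_iff_stack: "stack2 n A \<longleftrightarrow> stack 1 (Suc n) A"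
  unfolding stack2_def stack_def arcs_within_def by fastforce

lemma stack_insert_iff:
  assumes "(i, j) \<notin> A"
  shows "stack lo hi (insert (i, j) A) \<longleftrightarrow> stack lo hi A \<and> lo \<le> i \<and> i + 2 \<le> j \<and> j < hi \<and>
     \<not> crosses A i j \<and> \<not> matched A i \<and> \<not> matched A j"
  using assms unfolding stack_def arcs_within_def crosses_def matched_def by (auto; blast)

lemma saturated2_iff_saturated: "saturated2 n A \<longleftrightarrow> saturated 1 (Suc n) A"
proof -
  have "(\<forall>e. e \<notin> A \<longrightarrow> \<not> stack 1 (Suc n) (insert e A)) \<longleftrightarrow>
    (\<forall>i j. 1 \<le> i \<longrightarrow> i + 2 \<le> j \<longrightarrow> j < Suc n \<longrightarrow> \<not> matched A i \<longrightarrow> \<not> matched A j \<longrightarrow> crosses A i j)"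
    if "stack 1 (Suc n) A"
  proof -
    have "(i, j) \<notin> A" if "\<not> matched A i" for i j
      using that unfolding matched_def by blast
    then show ?thesis
      using that by (auto simp: stack_insert_iff)
  qed
  then show ?thesis
    unfolding saturated2_def saturated_def stack2_iff_stack by blast
qed

context
  fixes lo j hi :: nat and A1 A2 :: "(nat \<times> nat) set"
  assumes partner_bounds: "lo + 2 \<le> j" "j < hi"
    and inner: "arcs_within (Suc lo) j A1" and outer: "arcs_within (Suc j) hi A2"
begin

lemma stack_glue_iff:
  "stack lo hi (insert (lo, j) (A1 \<union> A2)) \<longleftrightarrow> stack (Suc lo) j A1 \<and> stack (Suc j) hi A2"
proof
  assume "stack lo hi (insert (lo, j) (A1 \<union> A2))"
  then show "stack (Suc lo) j A1 \<and> stack (Suc j) hi A2"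
    using stack_subset inner outer by blast
next
  assume "stack (Suc lo) j A1 \<and> stack (Suc j) hi A2"
  then have S1: "stack (Suc lo) j A1" and S2: "stack (Suc j) hi A2" by auto
  have arc: "x = lo \<and> y = j \<or> (x, y) \<in> A1 \<and> Suc lo \<le> x \<and> x + 2 \<le> y \<and> y < j \<or>
      (x, y) \<in> A2 \<and> Suc j \<le> x \<and> x + 2 \<le> y \<and> y < hi"
    if "(x, y) \<in> insert (lo, j) (A1 \<union> A2)" for x y
    using that arcs_withinD[OF inner] arcs_withinD[OF outer] by blast
  show "stack lo hi (insert (lo, j) (A1 \<union> A2))"
  proof (rule stackI)
    show "arcs_within lo hi (insert (lo, j) (A1 \<union> A2))"
      unfolding arcs_within_def using partner_bounds arc by fastforce
  next
    fix i k p q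
    assume "(i, k) \<in> insert (lo, j) (A1 \<union> A2)" "(p, q) \<in> insert (lo, j) (A1 \<union> A2)"
    from arc[OF this(1)] arc[OF this(2)] stack_noncrossing[OF S1, of i k p q]
      stack_noncrossing[OF S2, of i k p q]
    show "\<not> (i < p \<and> p < k \<and> k < q)" by linarith
  next
    fix i k p q
    assume "(i, k) \<in> insert (lo, j) (A1 \<union> A2)" "(p, q) \<in> insert (lo, j) (A1 \<union> A2)" "(i, k) \<noteq> (p, q)"
    from partner_bounds arc[OF this(1)] arc[OF this(2)] this(3) stack_disjoint[OF S1, of i k p q]
      stack_disjoint[OF S2, of i k p q]
    show "i \<noteq> p \<and> i \<noteq> q \<and> k \<noteq> p \<and> k \<noteq> q" by auto
  qed
qed

lemma saturated_glue_iff: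
  "saturated lo hi (insert (lo, j) (A1 \<union> A2)) \<longleftrightarrow> saturated (Suc lo) j A1 \<and> saturated (Suc j) hi A2"
  (is "saturated lo hi ?A \<longleftrightarrow> _")
proof
  assume S: "saturated lo hi ?A"
  have "stack (Suc lo) j A1" "stack (Suc j) hi A2"
    using stack_glue_iff saturated_stack[OF S] by auto
  moreover have "crosses A1 i k"
    if "Suc lo \<le> i" "i + 2 \<le> k" "k < j" "\<not> matched A1 i" "\<not> matched A1 k" for i k
    using that saturatedD[OF S, of i k] partner_bounds
      matched_arcs_within[OF outer] crosses_arcs_within[OF outer, of i k] by fastforce
  moreover have "crosses A2 i k"
    if "Suc j \<le> i" "i + 2 \<le> k" "k < hi" "\<not> matched A2 i" "\<not> matched A2 k" for i k
    using that saturatedD[OF S, of i k] partner_bounds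
      matched_arcs_within[OF inner] crosses_arcs_within[OF inner, of i k] by fastforce
  ultimately show "saturated (Suc lo) j A1 \<and> saturated (Suc j) hi A2"
    by (blast intro: saturatedI)
next
  assume "saturated (Suc lo) j A1 \<and> saturated (Suc j) hi A2"
  then have S1: "saturated (Suc lo) j A1" and S2: "saturated (Suc j) hi A2" by auto
  show "saturated lo hi ?A"
  proof (rule saturatedI)
    show "stack lo hi ?A" using stack_glue_iff saturated_stack S1 S2 by blast
  next
    fix i k assume ik: "lo \<le> i" "i + 2 \<le> k" "k < hi" "\<not> matched ?A i" "\<not> matched ?A k"
    then have free: "i \<noteq> lo" "i \<noteq> j" "k \<noteq> j" "\<not> matched A1 i" "\<not> matched A1 k"
      "\<not> matched A2 i" "\<not> matched A2 k"
      by auto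
    consider "k < j" | "j < i" | "i < j" "j < k"
      using free(2,3) by linarith
    then show "crosses ?A i k"
    proof cases
      case 1
      then show ?thesis using ik free saturatedD[OF S1, of i k] by simp
    next
      case 2
      then show ?thesis using ik free saturatedD[OF S2, of i k] by simp
    next
      case 3
      then show ?thesis using ik free by simp
    qed
  qed
qed

lemma unmatched_covered_glue_iff:
  "unmatched_covered lo hi (insert (lo, j) (A1 \<union> A2)) \<longleftrightarrow> unmatched_covered (Suc j) hi A2"
  (is "unmatched_covered lo hi ?A \<longleftrightarrow> _")
proof
  assume A: "unmatched_covered lo hi ?A"
  show "unmatched_covered (Suc j) hi A2"
    unfolding unmatched_covered_def
  proof (intro allI impI)
    fix v assume v: "Suc j \<le> v" "v < hi" "\<not> matched A2 v"
    then have "\<not> matched ?A v" "\<not> covered A1 v"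
      using partner_bounds matched_arcs_within[OF inner, of v] covered_arcs_within[OF inner, of v] by auto
    moreover have "lo \<le> v" using v(1) partner_bounds by linarith
    ultimately have "covered ?A v" "\<not> covered A1 v"
      using A v(2) unfolding unmatched_covered_def by auto
    then show "covered A2 v"
      using v(1) by auto
  qed
next
  assume A2: "unmatched_covered (Suc j) hi A2"
  show "unmatched_covered lo hi ?A"
    unfolding unmatched_covered_def
  proof (intro allI impI)
    fix v assume "lo \<le> v" "v < hi" "\<not> matched ?A v"
    then show "covered ?A v"
      using A2 unfolding unmatched_covered_def by (cases "v < j") auto
  qed
qed

lemma glue_inner_part: "{p \<in> insert (lo, j) (A1 \<union> A2). snd p < j} = A1"
  using arcs_withinD[OF inner] arcs_withinD[OF outer] by fastforce

lemma glue_outer_part: "{p \<in> insert (lo, j) (A1 \<union> A2). j < fst p} = A2"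
  using partner_bounds arcs_withinD[OF inner] arcs_withinD[OF outer] by fastforce

lemma card_glue: "card (insert (lo, j) (A1 \<union> A2)) = Suc (card A1 + card A2)"
proof -
  have "finite A1" "finite A2"
    using finite_arcs_within inner outer by blast+
  moreover have "A1 \<inter> A2 = {}" "(lo, j) \<notin> A1 \<union> A2"
    using arcs_withinD[OF inner] arcs_withinD[OF outer] by fastforce+
  ultimately show ?thesis
    by (simp add: card_Un_disjoint)
qed

end

lemma arcs_within_Suc_if_unmatched:
  assumes "stack lo hi A" "\<not> matched A lo"
  shows "arcs_within (Suc lo) hi A"
proof (rule arcs_withinI)
  fix i k assume "(i, k) \<in> A"
  moreover have "i \<noteq> lo" using assms(2) calculation unfolding matched_def by blast
  ultimately show "Suc lo \<le> i \<and> i + 2 \<le> k \<and> k < hi" using stack_arcD[OF assms(1)] by force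
qed

lemma matched_if_unmatched_covered:
  assumes "arcs_within lo hi A" "unmatched_covered lo hi A" "lo < hi"
  shows "matched A lo"
  using assms covered_arcs_within[OF assms(1), of lo] unfolding unmatched_covered_def by auto

lemma covered_if_saturated_unmatched_left:
  assumes S: "saturated lo hi A" and free: "\<not> matched A lo"
    and v: "Suc (Suc lo) \<le> v" "v < hi" "\<not> matched A v"
  shows "covered A v"
proof -
  have inside: "arcs_within (Suc lo) hi A"
    using arcs_within_Suc_if_unmatched[OF saturated_stack[OF S] free] .
  have "crosses A lo v"
    using saturatedD[OF S, of lo v] v free by auto
  then show ?thesis
    using arcs_withinD[OF inside] unfolding crosses_def covered_def by fastforce
qed

lemma saturated_unmatched_iff:
  assumes S: "stack lo hi A" and free: "\<not> matched A lo"
  shows "saturated lo hi A \<longleftrightarrow> saturated (Suc lo) hi A \<and>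
    (\<forall>v. Suc (Suc lo) \<le> v \<longrightarrow> v < hi \<longrightarrow> \<not> matched A v \<longrightarrow> covered A v)"
proof
  assume H: "saturated lo hi A"
  have "stack (Suc lo) hi A"
    using stack_subset[OF S order_refl arcs_within_Suc_if_unmatched[OF S free]] .
  then have "saturated (Suc lo) hi A"
    using saturatedD[OF H] by (intro saturatedI) auto
  then show "saturated (Suc lo) hi A \<and>
    (\<forall>v. Suc (Suc lo) \<le> v \<longrightarrow> v < hi \<longrightarrow> \<not> matched A v \<longrightarrow> covered A v)"
    using covered_if_saturated_unmatched_left[OF H free] by blast
next
  assume H: "saturated (Suc lo) hi A \<and>
    (\<forall>v. Suc (Suc lo) \<le> v \<longrightarrow> v < hi \<longrightarrow> \<not> matched A v \<longrightarrow> covered A v)"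
  show "saturated lo hi A"
  proof (rule saturatedI[OF S])
    fix i k assume ik: "lo \<le> i" "i + 2 \<le> k" "k < hi" "\<not> matched A i" "\<not> matched A k"
    show "crosses A i k"
    proof (cases "i = lo")
      case False
      then show ?thesis using H ik saturatedD[of "Suc lo" hi A i k] by auto
    next
      case True
      then have "covered A k" using H ik by auto
      then obtain p q where "(p, q) \<in> A" "p < k" "k < q" unfolding covered_def by blast
      moreover have "Suc lo \<le> p"
        using arcs_withinD[OF arcs_within_Suc_if_unmatched[OF S free] calculation(1)] by auto
      ultimately show ?thesis
        unfolding crosses_def using True by (intro exI[of _ p] exI[of _ q]) auto
    qed
  qed
qed

definition sat_stacks :: "bool \<Rightarrow> nat \<Rightarrow> nat \<Rightarrow> nat \<Rightarrow> (nat \<times> nat) set set" where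
  "sat_stacks c lo u m = {A. saturated lo (lo + u + 2 * m) A \<and>
     (c \<longrightarrow> unmatched_covered lo (lo + u + 2 * m) A) \<and> card A = m}"

lemma finite_sat_stacks: "finite (sat_stacks c lo u m)"
  by (rule finite_subset[OF _ finite_stacks[of lo "lo + u + 2 * m"]])
    (auto simp: sat_stacks_def dest: saturated_stack)

lemma sat_stacks_empty_interval: "sat_stacks c lo 0 0 = {{}}"
proof -
  have "A = {}" if "saturated lo lo A" for A
    using stack_arcD[OF saturated_stack[OF that]] by fastforce
  moreover have "saturated lo lo {}" "unmatched_covered lo lo {}"
    unfolding saturated_def stack_def arcs_within_def unmatched_covered_def by auto
  ultimately show ?thesis
    unfolding sat_stacks_def by auto
qed

lemma saturated_prepend_free:
  assumes S: "saturated (Suc lo) hi A"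
    and cov: "\<forall>v. Suc (Suc lo) \<le> v \<longrightarrow> v < hi \<longrightarrow> \<not> matched A v \<longrightarrow> covered A v"
  shows "saturated lo hi A" "\<not> matched A lo"
proof -
  have inside: "arcs_within (Suc lo) hi A"
    using stack_arcs_within[OF saturated_stack[OF S]] .
  show free: "\<not> matched A lo"
    using matched_arcs_within[OF inside, of lo] by auto
  have "stack lo hi A"
    using stack_subset[OF saturated_stack[OF S] order_refl arcs_within_mono[OF inside]] by simp
  then show "saturated lo hi A"
    using saturated_unmatched_iff free S cov by blast
qed

lemma sat_stacks_prepend_free:
  assumes "A \<in> sat_stacks True (Suc lo) u m"
  shows "A \<in> sat_stacks False lo (Suc u) m" "\<not> matched A lo"
  using assms saturated_prepend_free[of lo "Suc lo + u + 2 * m" A]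
  unfolding sat_stacks_def unmatched_covered_def by auto

lemma sat_stacks_prepend_two_free:
  assumes "A \<in> sat_stacks True (Suc (Suc lo)) u m"
  shows "A \<in> sat_stacks False lo (Suc (Suc u)) m" "\<not> matched A lo"
proof -
  have "saturated (Suc lo) (Suc (Suc lo) + u + 2 * m) A"
    using assms saturated_prepend_free[of "Suc lo" "Suc (Suc lo) + u + 2 * m" A]
    unfolding sat_stacks_def unmatched_covered_def by auto
  then show "A \<in> sat_stacks False lo (Suc (Suc u)) m" "\<not> matched A lo"
    using assms saturated_prepend_free[of lo "Suc (Suc lo) + u + 2 * m" A]
    unfolding sat_stacks_def unmatched_covered_def by auto
qed

lemma sat_stacks_unmatched_left_cases:
  assumes A: "A \<in> sat_stacks False lo u m" and free: "\<not> matched A lo" and size: "1 \<le> u + 2 * m"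
  obtains "u \<noteq> 0" "A \<in> sat_stacks True (Suc lo) (u - 1) m"
    | "2 \<le> u" "A \<in> sat_stacks True (Suc (Suc lo)) (u - 2) m"
proof -
  define hi where "hi = lo + u + 2 * m"
  have S: "saturated lo hi A" "card A = m"
    using A unfolding sat_stacks_def hi_def by auto
  have S1: "saturated (Suc lo) hi A"
    and cov: "\<forall>v. Suc (Suc lo) \<le> v \<longrightarrow> v < hi \<longrightarrow> \<not> matched A v \<longrightarrow> covered A v"
    using saturated_unmatched_iff[OF saturated_stack[OF S(1)] free] S(1) by auto
  show thesis
  proof (cases "Suc lo < hi \<and> \<not> matched A (Suc lo)")
    case False
    have "u \<noteq> 0"
      using stack_card_le[OF saturated_stack[OF S1]] S(2) size unfolding hi_def by auto
    moreover have "unmatched_covered (Suc lo) hi A"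
      unfolding unmatched_covered_def
    proof (intro allI impI)
      fix v assume "Suc lo \<le> v" "v < hi" "\<not> matched A v"
      then have "Suc (Suc lo) \<le> v"
        using False by (cases "v = Suc lo") auto
      then show "covered A v"
        using cov \<open>v < hi\<close> \<open>\<not> matched A v\<close> by blast
    qed
    moreover have "Suc lo + (u - 1) + 2 * m = hi"
      using \<open>u \<noteq> 0\<close> unfolding hi_def by simp
    ultimately show thesis
      using that(1) S1 S(2) unfolding sat_stacks_def by auto
  next
    case True
    have S2: "saturated (Suc (Suc lo)) hi A"
      using saturated_unmatched_iff[OF saturated_stack[OF S1]] True S1 by auto
    have "2 \<le> u"
      using stack_card_le[OF saturated_stack[OF S2]] S(2) True unfolding hi_def by auto
    moreover have "unmatched_covered (Suc (Suc lo)) hi A"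
      using cov unfolding unmatched_covered_def by auto
    moreover have "Suc (Suc lo) + (u - 2) + 2 * m = hi"
      using \<open>2 \<le> u\<close> unfolding hi_def by simp
    ultimately show thesis
      using that(2) S2 S(2) unfolding sat_stacks_def by auto
  qed
qed

lemma sat_stacks_unmatched_left:
  assumes "1 \<le> u + 2 * m"
  shows "{A \<in> sat_stacks False lo u m. \<not> matched A lo} =
    (if u = 0 then {} else sat_stacks True (Suc lo) (u - 1) m \<union>
      (if 2 \<le> u then sat_stacks True (Suc (Suc lo)) (u - 2) m else {}))"
proof (intro equalityI subsetI)
  fix A assume "A \<in> {A \<in> sat_stacks False lo u m. \<not> matched A lo}"
  then have "A \<in> sat_stacks False lo u m" "\<not> matched A lo"
    by auto
  then show "A \<in> (if u = 0 then {} else sat_stacks True (Suc lo) (u - 1) m \<union>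
      (if 2 \<le> u then sat_stacks True (Suc (Suc lo)) (u - 2) m else {}))"
    by (rule sat_stacks_unmatched_left_cases[OF _ _ assms]) auto
next
  fix A assume "A \<in> (if u = 0 then {} else sat_stacks True (Suc lo) (u - 1) m \<union>
      (if 2 \<le> u then sat_stacks True (Suc (Suc lo)) (u - 2) m else {}))"
  then consider "u \<noteq> 0" "A \<in> sat_stacks True (Suc lo) (u - 1) m"
    | "2 \<le> u" "A \<in> sat_stacks True (Suc (Suc lo)) (u - 2) m"
    by (auto split: if_splits)
  then show "A \<in> {A \<in> sat_stacks False lo u m. \<not> matched A lo}"
  proof cases
    case 1
    then show ?thesis
      using sat_stacks_prepend_free[of A lo "u - 1" m] by simp
  next
    case 2
    then have "Suc (Suc (u - 2)) = u" by simp
    then show ?thesis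
      using 2 sat_stacks_prepend_two_free[of A lo "u - 2" m] by simp
  qed
qed

lemma sat_stacks_covered_disjoint:
  "sat_stacks True (Suc lo) (Suc u) m \<inter> sat_stacks True (Suc (Suc lo)) u m = {}"
proof -
  have False if "A \<in> sat_stacks True (Suc lo) (Suc u) m" "A \<in> sat_stacks True (Suc (Suc lo)) u m" for A
  proof -
    define hi where "hi = lo + 2 + u + 2 * m"
    have S: "saturated (Suc (Suc lo)) hi A" and U: "unmatched_covered (Suc lo) hi A"
      using that unfolding sat_stacks_def hi_def by auto
    have inside: "arcs_within (Suc (Suc lo)) hi A"
      using stack_arcs_within[OF saturated_stack[OF S]] .
    have "matched A (Suc lo)"
      using matched_if_unmatched_covered[OF arcs_within_mono[OF inside] U] unfolding hi_def by simp
    then show False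
      using matched_arcs_within[OF inside] by fastforce
  qed
  then show ?thesis by blast
qed

lemma card_sat_stacks_unmatched_left:
  assumes "1 \<le> u + 2 * m"
  shows "card {A \<in> sat_stacks False lo u m. \<not> matched A lo} =
    (if u = 0 then 0 else card (sat_stacks True (Suc lo) (u - 1) m) +
      (if 2 \<le> u then card (sat_stacks True (Suc (Suc lo)) (u - 2) m) else 0))"
proof -
  have "sat_stacks True (Suc lo) (u - 1) m \<inter> sat_stacks True (Suc (Suc lo)) (u - 2) m = {}"
    if "2 \<le> u"
    using sat_stacks_covered_disjoint[of lo "u - 2" m] that by (simp add: Suc_diff_Suc numeral_2_eq_2)
  then show ?thesis
    unfolding sat_stacks_unmatched_left[OF assms]
    by (simp add: card_Un_disjoint finite_sat_stacks)
qed

lemma sat_stacks_covered_unmatched_left: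
  assumes "1 \<le> u + 2 * m"
  shows "{A \<in> sat_stacks True lo u m. \<not> matched A lo} = {}"
proof -
  have False if "A \<in> sat_stacks True lo u m" "\<not> matched A lo" for A
  proof -
    define hi where "hi = lo + u + 2 * m"
    have S: "stack lo hi A" and U: "unmatched_covered lo hi A"
      using that(1) saturated_stack unfolding sat_stacks_def hi_def by auto
    have "arcs_within lo hi A"
      using arcs_within_mono[OF arcs_within_Suc_if_unmatched[OF S that(2)]] by simp
    moreover have "lo < hi"
      using assms unfolding hi_def by linarith
    ultimately show False
      using matched_if_unmatched_covered[OF _ U] that(2) by blast
  qed
  then show ?thesis by blast
qed

definition split_index :: "nat \<Rightarrow> nat \<Rightarrow> (nat \<times> nat) set" where
  "split_index u m = {(u1, m1). u1 \<le> u \<and> m1 < m \<and> 1 \<le> u1 + 2 * m1}"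

definition split_domain ::
  "bool \<Rightarrow> nat \<Rightarrow> nat \<Rightarrow> nat \<Rightarrow> ((nat \<times> nat) \<times> (nat \<times> nat) set \<times> (nat \<times> nat) set) set" where
  "split_domain c lo u m = (SIGMA (u1, m1):split_index u m.
     sat_stacks False (Suc lo) u1 m1 \<times> sat_stacks c (lo + 2 + u1 + 2 * m1) (u - u1) (m - 1 - m1))"

(* The arc from lo ends at lo + 1 + u1 + 2 * m1, enclosing u1 free vertices and m1 arcs. *)
definition glue :: "nat \<Rightarrow> (nat \<times> nat) \<times> (nat \<times> nat) set \<times> (nat \<times> nat) set \<Rightarrow> (nat \<times> nat) set" where
  "glue lo = (\<lambda>((u1, m1), A1, A2). insert (lo, lo + 1 + u1 + 2 * m1) (A1 \<union> A2))"

definition partner :: "(nat \<times> nat) set \<Rightarrow> nat \<Rightarrow> nat" where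
  "partner A i = (THE j. (i, j) \<in> A)"

definition split_at :: "nat \<Rightarrow> (nat \<times> nat) set \<Rightarrow> (nat \<times> nat) \<times> (nat \<times> nat) set \<times> (nat \<times> nat) set" where
  "split_at lo A = (let j = partner A lo; A1 = {p \<in> A. snd p < j}
     in ((j - Suc lo - 2 * card A1, card A1), A1, {p \<in> A. j < fst p}))"

lemma finite_split_index: "finite (split_index u m)"
  by (rule finite_subset[of _ "{..u} \<times> {..<m}"]) (auto simp: split_index_def)

lemma partner_eq: "stack lo hi A \<Longrightarrow> (i, j) \<in> A \<Longrightarrow> partner A i = j"
  unfolding partner_def by (rule the_equality) (auto dest: stack_disjoint)

lemma stack_split_at_arc:
  assumes S: "stack lo hi A" and arc: "(lo, j) \<in> A"
  shows "A = insert (lo, j) ({p \<in> A. snd p < j} \<union> {p \<in> A. j < fst p})"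
    and "arcs_within (Suc lo) j {p \<in> A. snd p < j}"
    and "arcs_within (Suc j) hi {p \<in> A. j < fst p}"
proof -
  have inside_or_right: "k < j \<or> j < i" if "(i, k) \<in> A" "(i, k) \<noteq> (lo, j)" for i k
  proof -
    have "i \<noteq> j" "k \<noteq> j" "lo \<le> i" "i < k"
      using stack_disjoint[OF S that(1) arc that(2)] stack_arcD[OF S that(1)] by auto
    moreover have "\<not> (lo < i \<and> i < j \<and> j < k)"
      using stack_noncrossing[OF S arc that(1)] .
    moreover have "i \<noteq> lo"
      using stack_disjoint[OF S that(1) arc that(2)] by auto
    ultimately show ?thesis by linarith
  qed
  show "A = insert (lo, j) ({p \<in> A. snd p < j} \<union> {p \<in> A. j < fst p})"
  proof (intro equalityI subsetI)
    fix p assume "p \<in> A"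
    then show "p \<in> insert (lo, j) ({p \<in> A. snd p < j} \<union> {p \<in> A. j < fst p})"
      using inside_or_right[of "fst p" "snd p"] by auto
  qed (use arc in auto)
  show "arcs_within (Suc lo) j {p \<in> A. snd p < j}"
  proof (rule arcs_withinI)
    fix i k assume "(i, k) \<in> {p \<in> A. snd p < j}"
    then have "(i, k) \<in> A" "k < j" by auto
    then show "Suc lo \<le> i \<and> i + 2 \<le> k \<and> k < j"
      using stack_disjoint[OF S _ arc, of i k] stack_arcD[OF S, of i k] by fastforce
  qed
  show "arcs_within (Suc j) hi {p \<in> A. j < fst p}"
    unfolding arcs_within_def using stack_arcD[OF S] by auto
qed

lemma glue_split_domain:
  assumes x: "x \<in> split_domain c lo u m"
  shows "glue lo x \<in> sat_stacks c lo u m" "matched (glue lo x) lo" "split_at lo (glue lo x) = x"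
proof -
  obtain u1 m1 A1 A2 where x_eq: "x = ((u1, m1), A1, A2)"
    by (metis prod.collapse)
  define j where "j = lo + 1 + u1 + 2 * m1"
  define hi where "hi = lo + u + 2 * m"
  have index: "u1 \<le> u" "m1 < m" "1 \<le> u1 + 2 * m1"
    using x unfolding x_eq split_domain_def split_index_def by auto
  have bounds: "lo + 2 \<le> j" "j < hi" "Suc lo + u1 + 2 * m1 = j"
    "lo + 2 + u1 + 2 * m1 + (u - u1) + 2 * (m - 1 - m1) = hi" "lo + 2 + u1 + 2 * m1 = Suc j"
    using index unfolding j_def hi_def by auto
  have A1: "saturated (Suc lo) j A1" "card A1 = m1"
    and A2: "saturated (Suc j) hi A2" "c \<longrightarrow> unmatched_covered (Suc j) hi A2" "card A2 = m - 1 - m1"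
    using x bounds unfolding x_eq split_domain_def sat_stacks_def by auto
  have inner: "arcs_within (Suc lo) j A1" and outer: "arcs_within (Suc j) hi A2"
    using A1(1) A2(1) by (blast dest: saturated_stack stack_arcs_within)+
  have glue_eq: "glue lo x = insert (lo, j) (A1 \<union> A2)"
    unfolding x_eq glue_def j_def by simp
  have "saturated lo hi (glue lo x)" "c \<longrightarrow> unmatched_covered lo hi (glue lo x)"
    using saturated_glue_iff[OF bounds(1,2) inner outer] unmatched_covered_glue_iff[OF bounds(1,2) inner outer]
      A1 A2 unfolding glue_eq by auto
  moreover have "card (glue lo x) = m"
    using card_glue[OF bounds(1,2) inner outer] A1(2) A2(3) index unfolding glue_eq by simp
  ultimately show "glue lo x \<in> sat_stacks c lo u m"
    unfolding sat_stacks_def hi_def by simp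
  show "matched (glue lo x) lo"
    unfolding glue_eq by simp
  have "partner (glue lo x) lo = j"
    using partner_eq[OF saturated_stack] \<open>saturated lo hi (glue lo x)\<close> glue_eq by auto
  moreover have "{p \<in> glue lo x. snd p < j} = A1" "{p \<in> glue lo x. j < fst p} = A2"
    using glue_inner_part[OF bounds(1,2) inner outer] glue_outer_part[OF bounds(1,2) inner outer]
    unfolding glue_eq by simp_all
  ultimately show "split_at lo (glue lo x) = x"
    unfolding split_at_def Let_def using A1(2) bounds(3) x_eq by simp
qed

lemma split_at_sat_stacks:
  assumes A: "A \<in> sat_stacks c lo u m" and lo_matched: "matched A lo"
  shows "split_at lo A \<in> split_domain c lo u m" "glue lo (split_at lo A) = A"
proof -
  define hi where "hi = lo + u + 2 * m"
  have S: "saturated lo hi A" and U: "c \<longrightarrow> unmatched_covered lo hi A" and card_A: "card A = m"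
    using A unfolding sat_stacks_def hi_def by auto
  obtain j where arc: "(lo, j) \<in> A"
    using lo_matched stack_arcD[OF saturated_stack[OF S]] unfolding matched_def by fastforce
  define A1 where "A1 = {p \<in> A. snd p < j}"
  define A2 where "A2 = {p \<in> A. j < fst p}"
  have A_eq: "A = insert (lo, j) (A1 \<union> A2)"
    and inner: "arcs_within (Suc lo) j A1" and outer: "arcs_within (Suc j) hi A2"
    using stack_split_at_arc[OF saturated_stack[OF S] arc] unfolding A1_def A2_def by simp_all
  have bounds: "lo + 2 \<le> j" "j < hi"
    using stack_arcD[OF saturated_stack[OF S] arc] by auto
  have A1: "saturated (Suc lo) j A1" and A2: "saturated (Suc j) hi A2"
    "c \<longrightarrow> unmatched_covered (Suc j) hi A2"
    using S U saturated_glue_iff[OF bounds inner outer] unmatched_covered_glue_iff[OF bounds inner outer]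
    unfolding A_eq[symmetric] by auto
  define m1 where "m1 = card A1"
  define u1 where "u1 = j - Suc lo - 2 * m1"
  have "2 * m1 \<le> j - Suc lo" "2 * card A2 \<le> hi - Suc j"
    using stack_card_le saturated_stack A1 A2(1) unfolding m1_def by blast+
  moreover have "m = Suc (m1 + card A2)"
    using card_A card_glue[OF bounds inner outer] unfolding A_eq m1_def by simp
  ultimately have index: "u1 \<le> u" "m1 < m" "1 \<le> u1 + 2 * m1" "Suc lo + u1 + 2 * m1 = j"
    "lo + 2 + u1 + 2 * m1 + (u - u1) + 2 * (m - 1 - m1) = hi" "lo + 2 + u1 + 2 * m1 = Suc j"
    "card A2 = m - 1 - m1"
    using bounds unfolding u1_def hi_def by auto
  have "A1 \<in> sat_stacks False (Suc lo) u1 m1"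
    unfolding sat_stacks_def index(4) using A1 m1_def by simp
  moreover have "A2 \<in> sat_stacks c (lo + 2 + u1 + 2 * m1) (u - u1) (m - 1 - m1)"
    unfolding sat_stacks_def index(5) unfolding index(6) using A2 index(7) by simp
  moreover have split_eq: "split_at lo A = ((u1, m1), A1, A2)"
    using partner_eq[OF saturated_stack[OF S] arc]
    unfolding split_at_def Let_def u1_def m1_def A1_def A2_def by simp
  ultimately show "split_at lo A \<in> split_domain c lo u m"
    unfolding split_domain_def split_index_def using index by simp
  show "glue lo (split_at lo A) = A"
    unfolding split_eq glue_def using A_eq index by simp
qed

lemma card_sat_stacks_matched_left:
  "card {A \<in> sat_stacks c lo u m. matched A lo} =
    (\<Sum>(u1, m1)\<in>split_index u m.
      card (sat_stacks False (Suc lo) u1 m1) * card (sat_stacks c (lo + 2 + u1 + 2 * m1) (u - u1) (m - 1 - m1)))"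
proof -
  have "bij_betw (glue lo) (split_domain c lo u m) {A \<in> sat_stacks c lo u m. matched A lo}"
  proof (rule bij_betw_byWitness[where f' = "split_at lo"])
    show "\<forall>x\<in>split_domain c lo u m. split_at lo (glue lo x) = x"
      using glue_split_domain(3) by blast
    show "\<forall>A\<in>{A \<in> sat_stacks c lo u m. matched A lo}. glue lo (split_at lo A) = A"
      using split_at_sat_stacks(2) by blast
    show "glue lo ` split_domain c lo u m \<subseteq> {A \<in> sat_stacks c lo u m. matched A lo}"
      using glue_split_domain(1,2) by blast
    show "split_at lo ` {A \<in> sat_stacks c lo u m. matched A lo} \<subseteq> split_domain c lo u m"
      using split_at_sat_stacks(1) by blast
  qed
  then have "card {A \<in> sat_stacks c lo u m. matched A lo} = card (split_domain c lo u m)"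
    by (simp add: bij_betw_same_card)
  also have "\<dots> = (\<Sum>p\<in>split_index u m. card ((\<lambda>(u1, m1).
      sat_stacks False (Suc lo) u1 m1 \<times> sat_stacks c (lo + 2 + u1 + 2 * m1) (u - u1) (m - 1 - m1)) p))"
    unfolding split_domain_def
    by (rule card_SigmaI[OF finite_split_index]) (simp add: finite_sat_stacks split_beta)
  also have "\<dots> = (\<Sum>(u1, m1)\<in>split_index u m.
      card (sat_stacks False (Suc lo) u1 m1) * card (sat_stacks c (lo + 2 + u1 + 2 * m1) (u - u1) (m - 1 - m1)))"
    by (rule sum.cong) (auto simp: card_cartesian_product)
  finally show ?thesis .
qed

lemma card_sat_stacks_split_left:
  "card (sat_stacks c lo u m) =
    card {A \<in> sat_stacks c lo u m. matched A lo} + card {A \<in> sat_stacks c lo u m. \<not> matched A lo}"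
proof -
  have "sat_stacks c lo u m = {A \<in> sat_stacks c lo u m. matched A lo} \<union> {A \<in> sat_stacks c lo u m. \<not> matched A lo}"
    by blast
  then show ?thesis
    by (metis (no_types, lifting) card_Un_disjoint disjoint_iff finite_sat_stacks finite_subset
        mem_Collect_eq subsetI)
qed

lemma card_sat_stacks_rec:
  assumes "1 \<le> u + 2 * m"
  shows "card (sat_stacks False lo u m) =
    (if u = 0 then 0 else card (sat_stacks True (Suc lo) (u - 1) m) +
      (if 2 \<le> u then card (sat_stacks True (Suc (Suc lo)) (u - 2) m) else 0)) +
    (\<Sum>(u1, m1)\<in>split_index u m.
      card (sat_stacks False (Suc lo) u1 m1) * card (sat_stacks False (lo + 2 + u1 + 2 * m1) (u - u1) (m - 1 - m1)))"
  using card_sat_stacks_split_left[of False lo u m] card_sat_stacks_unmatched_left[OF assms, of lo]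
    card_sat_stacks_matched_left[of False lo u m] by simp

lemma card_sat_stacks_covered_rec:
  assumes "1 \<le> u + 2 * m"
  shows "card (sat_stacks True lo u m) =
    (\<Sum>(u1, m1)\<in>split_index u m.
      card (sat_stacks False (Suc lo) u1 m1) * card (sat_stacks True (lo + 2 + u1 + 2 * m1) (u - u1) (m - 1 - m1)))"
  using card_sat_stacks_split_left[of True lo u m] sat_stacks_covered_unmatched_left[OF assms, of lo]
    card_sat_stacks_matched_left[of True lo u m] by simp

(* The recurrences above do not depend on lo, so translation invariance follows by induction. *)
lemma card_sat_stacks_shift: "card (sat_stacks c lo u m) = card (sat_stacks c 0 u m)"
proof (induction "u + 2 * m" arbitrary: c lo u m rule: less_induct)
  case less
  have IH: "card (sat_stacks c' l u' m') = card (sat_stacks c' 0 u' m')"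
    if "u' + 2 * m' < u + 2 * m" for c' l u' m'
    using less that by blast
  show ?case
  proof (cases "u + 2 * m = 0")
    case True
    then show ?thesis by (simp add: sat_stacks_empty_interval)
  next
    case False
    then have size: "1 \<le> u + 2 * m" by linarith
    have split_sum: "(\<Sum>(u1, m1)\<in>split_index u m.
        card (sat_stacks False (Suc l) u1 m1) * card (sat_stacks c' (l + 2 + u1 + 2 * m1) (u - u1) (m - 1 - m1))) =
      (\<Sum>(u1, m1)\<in>split_index u m.
        card (sat_stacks False 0 u1 m1) * card (sat_stacks c' 0 (u - u1) (m - 1 - m1)))" for l c'
    proof (rule sum.cong[OF refl], clarify)
      fix u1 m1 assume "(u1, m1) \<in> split_index u m"
      then have "u1 + 2 * m1 < u + 2 * m" "u - u1 + 2 * (m - 1 - m1) < u + 2 * m"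
        by (auto simp: split_index_def)
      then show "card (sat_stacks False (Suc l) u1 m1) * card (sat_stacks c' (l + 2 + u1 + 2 * m1) (u - u1) (m - 1 - m1)) =
        card (sat_stacks False 0 u1 m1) * card (sat_stacks c' 0 (u - u1) (m - 1 - m1))"
        using IH by metis
    qed
    have unmatched_left: "(if u = 0 then 0 else card (sat_stacks True (Suc l) (u - 1) m) +
        (if 2 \<le> u then card (sat_stacks True (Suc (Suc l)) (u - 2) m) else 0)) =
      (if u = 0 then 0 else card (sat_stacks True 0 (u - 1) m) +
        (if 2 \<le> u then card (sat_stacks True 0 (u - 2) m) else 0))" for l
      using IH[of "u - 1" m True "Suc l"] IH[of "u - 2" m True "Suc (Suc l)"] by simp
    have "card (sat_stacks True lo u m) = card (sat_stacks True 0 u m)"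
      unfolding card_sat_stacks_covered_rec[OF size, of lo] card_sat_stacks_covered_rec[OF size, of 0]
        split_sum ..
    moreover have "card (sat_stacks False lo u m) = card (sat_stacks False 0 u m)"
      unfolding card_sat_stacks_rec[OF size, of lo] card_sat_stacks_rec[OF size, of 0]
        split_sum unmatched_left ..
    ultimately show ?thesis
      by (cases c) simp_all
  qed
qed

definition num_sat :: "nat \<Rightarrow> nat \<Rightarrow> nat" where
  "num_sat u m = card (sat_stacks False 0 u m)"

definition num_sat_cov :: "nat \<Rightarrow> nat \<Rightarrow> nat" where
  "num_sat_cov u m = card (sat_stacks True 0 u m)"

lemma num_sat_rec:
  assumes "1 \<le> u + 2 * m"
  shows "num_sat u m =
    (if u = 0 then 0 else num_sat_cov (u - 1) m + (if 2 \<le> u then num_sat_cov (u - 2) m else 0)) +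
    (\<Sum>(u1, m1)\<in>split_index u m. num_sat u1 m1 * num_sat (u - u1) (m - 1 - m1))"
  unfolding num_sat_def num_sat_cov_def card_sat_stacks_rec[OF assms, of 0]
  by (subst (1 2 3 4) card_sat_stacks_shift) (rule refl)

lemma num_sat_cov_rec:
  assumes "1 \<le> u + 2 * m"
  shows "num_sat_cov u m = (\<Sum>(u1, m1)\<in>split_index u m. num_sat u1 m1 * num_sat_cov (u - u1) (m - 1 - m1))"
  unfolding num_sat_def num_sat_cov_def card_sat_stacks_covered_rec[OF assms, of 0]
  by (subst (1 2) card_sat_stacks_shift) (rule refl)

lemma num_sat_no_free: "num_sat 0 m = (if m = 0 then 1 else 0)"
proof (induction m rule: less_induct)
  case (less m)
  show ?case
  proof (cases "m = 0")
    case True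
    then show ?thesis by (simp add: num_sat_def sat_stacks_empty_interval)
  next
    case False
    have "num_sat 0 m = (\<Sum>(u1, m1)\<in>split_index 0 m. num_sat u1 m1 * num_sat (0 - u1) (m - 1 - m1))"
      using num_sat_rec[of 0 m] False by simp
    also have "\<dots> = 0"
      using less by (intro sum.neutral) (auto simp: split_index_def)
    finally show ?thesis using False by simp
  qed
qed

lemma num_sat_cov_no_free: "num_sat_cov 0 m = (if m = 0 then 1 else 0)"
proof (cases "m = 0")
  case True
  then show ?thesis by (simp add: num_sat_cov_def sat_stacks_empty_interval)
next
  case False
  have "num_sat_cov 0 m = (\<Sum>(u1, m1)\<in>split_index 0 m. num_sat u1 m1 * num_sat_cov (0 - u1) (m - 1 - m1))"
    using num_sat_cov_rec[of 0 m] False by simp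
  also have "\<dots> = 0"
    by (intro sum.neutral) (auto simp: split_index_def num_sat_no_free)
  finally show ?thesis using False by simp
qed

unbundle fps_syntax

definition sat_gf :: "nat \<Rightarrow> real fps" where
  "sat_gf u = Abs_fps (\<lambda>m. real (num_sat u m))"

definition sat_cov_gf :: "nat \<Rightarrow> real fps" where
  "sat_cov_gf u = Abs_fps (\<lambda>m. real (num_sat_cov u m))"

lemma sat_gf_no_free: "sat_gf 0 = 1"
  unfolding sat_gf_def by (rule fps_ext) (simp add: num_sat_no_free)

lemma sat_cov_gf_no_free: "sat_cov_gf 0 = 1"
  unfolding sat_cov_gf_def by (rule fps_ext) (simp add: num_sat_cov_no_free)

lemma sum_split_index:
  fixes f :: "nat \<Rightarrow> nat \<Rightarrow> 'a::comm_monoid_add"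
  assumes "\<And>m1. 1 \<le> m1 \<Longrightarrow> f 0 m1 = 0" and "1 \<le> u"
  shows "(\<Sum>(u1, m1)\<in>split_index u m. f u1 m1) = (\<Sum>u1=1..u. \<Sum>m1<m. f u1 m1)"
proof -
  have "(\<Sum>u1=1..u. \<Sum>m1<m. f u1 m1) = (\<Sum>(u1, m1)\<in>{1..u} \<times> {..<m}. f u1 m1)"
    by (simp add: sum.cartesian_product)
  also have "\<dots> = (\<Sum>(u1, m1)\<in>split_index u m. f u1 m1)"
  proof (rule sum.mono_neutral_left[OF finite_split_index])
    show "{1..u} \<times> {..<m} \<subseteq> split_index u m"
      by (auto simp: split_index_def)
    show "\<forall>p\<in>split_index u m - {1..u} \<times> {..<m}. (case p of (u1, m1) \<Rightarrow> f u1 m1) = 0"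
    proof
      fix p assume p: "p \<in> split_index u m - {1..u} \<times> {..<m}"
      then have "fst p = 0" "1 \<le> snd p"
        by (auto simp: split_index_def)
      then show "(case p of (u1, m1) \<Rightarrow> f u1 m1) = 0"
        using assms(1) by (simp add: split_beta)
    qed
  qed
  finally show ?thesis ..
qed

lemma fps_X_mult_sum_nth:
  fixes F G :: "nat \<Rightarrow> 'a::comm_ring_1 fps"
  shows "(fps_X * (\<Sum>i\<in>I. F i * G i)) $ m =
    (if m = 0 then 0 else \<Sum>i\<in>I. \<Sum>j<m. F i $ j * G i $ (m - 1 - j))"
proof (cases m)
  case (Suc k)
  have "(fps_X * (\<Sum>i\<in>I. F i * G i)) $ m = (\<Sum>i\<in>I. \<Sum>j=0..k. F i $ j * G i $ (k - j))"
    unfolding Suc by (simp only: fps_X_mult_nth) (simp add: fps_sum_nth fps_mult_nth)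
  then show ?thesis
    unfolding Suc atLeast0AtMost lessThan_Suc_atMost by simp
qed simp

lemma sat_gf_rec:
  assumes "1 \<le> u"
  shows "sat_gf u = sat_cov_gf (u - 1) + (if 2 \<le> u then sat_cov_gf (u - 2) else 0) +
    fps_X * (\<Sum>u1=1..u. sat_gf u1 * sat_gf (u - u1))"
proof (rule fps_ext)
  fix m
  have size: "1 \<le> u + 2 * m"
    using assms by linarith
  have "real (num_sat u m) = real (num_sat_cov (u - 1) m) + (if 2 \<le> u then real (num_sat_cov (u - 2) m) else 0) +
    (\<Sum>(u1, m1)\<in>split_index u m. real (num_sat u1 m1) * real (num_sat (u - u1) (m - 1 - m1)))"
    using num_sat_rec[OF size] assms by (simp add: split_def)
  also have "(\<Sum>(u1, m1)\<in>split_index u m. real (num_sat u1 m1) * real (num_sat (u - u1) (m - 1 - m1))) =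
    (\<Sum>u1=1..u. \<Sum>m1<m. real (num_sat u1 m1) * real (num_sat (u - u1) (m - 1 - m1)))"
    by (rule sum_split_index) (use assms in \<open>simp_all add: num_sat_no_free\<close>)
  finally show "sat_gf u $ m = (sat_cov_gf (u - 1) + (if 2 \<le> u then sat_cov_gf (u - 2) else 0) +
    fps_X * (\<Sum>u1=1..u. sat_gf u1 * sat_gf (u - u1))) $ m"
    unfolding fps_add_nth fps_X_mult_sum_nth by (cases "m = 0") (auto simp: sat_gf_def sat_cov_gf_def)
qed

lemma sat_cov_gf_rec:
  assumes "1 \<le> u"
  shows "sat_cov_gf u = fps_X * (\<Sum>u1=1..u. sat_gf u1 * sat_cov_gf (u - u1))"
proof (rule fps_ext)
  fix m
  have size: "1 \<le> u + 2 * m"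
    using assms by linarith
  have "real (num_sat_cov u m) =
    (\<Sum>(u1, m1)\<in>split_index u m. real (num_sat u1 m1) * real (num_sat_cov (u - u1) (m - 1 - m1)))"
    using num_sat_cov_rec[OF size] by (simp add: split_def)
  also have "\<dots> = (\<Sum>u1=1..u. \<Sum>m1<m. real (num_sat u1 m1) * real (num_sat_cov (u - u1) (m - 1 - m1)))"
    by (rule sum_split_index) (use assms in \<open>simp_all add: num_sat_no_free\<close>)
  finally show "sat_cov_gf u $ m = (fps_X * (\<Sum>u1=1..u. sat_gf u1 * sat_cov_gf (u - u1))) $ m"
    unfolding fps_X_mult_sum_nth by (cases "m = 0") (auto simp: sat_gf_def sat_cov_gf_def)
qed

definition geom :: "real fps" where
  "geom = inverse (1 - fps_X)"

lemma fps_X_mult_geom: "fps_X * geom = geom - 1"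
proof -
  have "(1 - fps_X) * geom = 1"
    unfolding geom_def by (rule inverse_mult_eq_1') simp
  then show ?thesis by algebra
qed

lemma geom_power_nth: "(geom ^ Suc k) $ m = real ((m + k) choose k)"
proof -
  have "geom ^ Suc k = inverse ((1 - fps_const 1 * fps_X) ^ Suc k)"
    unfolding geom_def fps_inverse_power by simp
  also have "\<dots> = Abs_fps (\<lambda>j. real ((Suc k + j - 1) choose j) * 1 ^ j)"
    by (rule one_minus_const_fps_X_neg_power') simp
  finally show ?thesis
    using binomial_symmetric[of m "m + k"] by (simp add: add.commute)
qed

lemma geom_power_numeral_nth: "(geom ^ numeral k) $ m = real ((m + pred_numeral k) choose pred_numeral k)"
  using geom_power_nth[of "pred_numeral k" m] by (simp only: numeral_eq_Suc)

lemma sat_gf_1: "sat_gf 1 = geom"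
proof -
  have "sat_gf 1 = sat_cov_gf 0 + fps_X * (sat_gf 1 * sat_gf 0)"
    by (subst sat_gf_rec[of 1]) (simp_all add: numeral_eq_Suc sum.atLeast_Suc_atMost)
  then show ?thesis
    using fps_X_mult_geom
    unfolding sat_cov_gf_no_free sat_gf_no_free by algebra
qed

lemma sat_cov_gf_1: "sat_cov_gf 1 = geom - 1"
proof -
  have "sat_cov_gf 1 = fps_X * (sat_gf 1 * sat_cov_gf 0)"
    by (subst sat_cov_gf_rec[of 1]) (simp_all add: numeral_eq_Suc sum.atLeast_Suc_atMost)
  then show ?thesis
    using fps_X_mult_geom
    unfolding sat_gf_1 sat_cov_gf_no_free by algebra
qed

lemma sat_gf_2: "sat_gf 2 = geom ^ 3"
proof -
  have "sat_gf 2 = sat_cov_gf 1 + sat_cov_gf 0 + fps_X * (sat_gf 1 * sat_gf 1 + sat_gf 2 * sat_gf 0)"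
    by (subst sat_gf_rec[of 2]) (simp_all add: numeral_eq_Suc sum.atLeast_Suc_atMost)
  then show ?thesis
    using fps_X_mult_geom
    unfolding sat_gf_1 sat_cov_gf_1 sat_cov_gf_no_free sat_gf_no_free by algebra
qed

lemma sat_cov_gf_2: "sat_cov_gf 2 = geom ^ 3 - 2 * geom + 1"
proof -
  have "sat_cov_gf 2 = fps_X * (sat_gf 1 * sat_cov_gf 1 + sat_gf 2 * sat_cov_gf 0)"
    by (subst sat_cov_gf_rec[of 2]) (simp_all add: numeral_eq_Suc sum.atLeast_Suc_atMost)
  then show ?thesis
    using fps_X_mult_geom
    unfolding sat_gf_1 sat_gf_2 sat_cov_gf_1 sat_cov_gf_no_free by algebra
qed

lemma sat_gf_3: "sat_gf 3 = 2 * geom ^ 5 - geom ^ 4 - geom ^ 2"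
proof -
  have "sat_gf 3 = sat_cov_gf 2 + sat_cov_gf 1 + fps_X * (sat_gf 1 * sat_gf 2 + sat_gf 2 * sat_gf 1
      + sat_gf 3 * sat_gf 0)"
    by (subst sat_gf_rec[of 3]) (simp_all add: numeral_eq_Suc sum.atLeast_Suc_atMost)
  then show ?thesis
    using fps_X_mult_geom
    unfolding sat_gf_1 sat_gf_2 sat_cov_gf_2 sat_cov_gf_1 sat_gf_no_free by algebra
qed

lemma sat_cov_gf_3: "sat_cov_gf 3 = 2 * geom ^ 5 - geom ^ 4 - 2 * geom ^ 3 - 2 * geom ^ 2 + 4 * geom - 1"
proof -
  have "sat_cov_gf 3 = fps_X * (sat_gf 1 * sat_cov_gf 2 + sat_gf 2 * sat_cov_gf 1 + sat_gf 3 * sat_cov_gf 0)"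
    by (subst sat_cov_gf_rec[of 3]) (simp_all add: numeral_eq_Suc sum.atLeast_Suc_atMost)
  then show ?thesis
    using fps_X_mult_geom
    unfolding sat_gf_1 sat_gf_2 sat_gf_3 sat_cov_gf_1 sat_cov_gf_2 sat_cov_gf_no_free by algebra
qed

lemma sat_gf_4: "sat_gf 4 = 5 * geom ^ 7 - 5 * geom ^ 6 + geom ^ 5 - 3 * geom ^ 4 + 2 * geom ^ 2"
proof -
  have "sat_gf 4 = sat_cov_gf 3 + sat_cov_gf 2 + fps_X * (sat_gf 1 * sat_gf 3 + sat_gf 2 * sat_gf 2
      + sat_gf 3 * sat_gf 1 + sat_gf 4 * sat_gf 0)"
    by (subst sat_gf_rec[of 4]) (simp_all add: numeral_eq_Suc sum.atLeast_Suc_atMost)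
  then show ?thesis
    using fps_X_mult_geom
    unfolding sat_gf_1 sat_gf_2 sat_gf_3 sat_cov_gf_3 sat_cov_gf_2 sat_gf_no_free by algebra
qed

lemma sat_cov_gf_4: "sat_cov_gf 4 = 5 * geom ^ 7 - 5 * geom ^ 6 - 3 * geom ^ 5 - 3 * geom ^ 4 + 4 * geom ^ 3
    + 9 * geom ^ 2 - 8 * geom + 1"
proof -
  have "sat_cov_gf 4 = fps_X * (sat_gf 1 * sat_cov_gf 3 + sat_gf 2 * sat_cov_gf 2 + sat_gf 3 * sat_cov_gf 1
      + sat_gf 4 * sat_cov_gf 0)"
    by (subst sat_cov_gf_rec[of 4]) (simp_all add: numeral_eq_Suc sum.atLeast_Suc_atMost)
  then show ?thesis
    using fps_X_mult_geom
    unfolding sat_gf_1 sat_gf_2 sat_gf_3 sat_gf_4 sat_cov_gf_1 sat_cov_gf_2 sat_cov_gf_3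
      sat_cov_gf_no_free by algebra
qed

lemma sat_gf_5: "sat_gf 5 = 14 * geom ^ 9 - 21 * geom ^ 8 + 9 * geom ^ 7 - 11 * geom ^ 6 + 4 * geom ^ 5
    + 6 * geom ^ 4 + 3 * geom ^ 3 - 4 * geom ^ 2"
proof -
  have "sat_gf 5 = sat_cov_gf 4 + sat_cov_gf 3 + fps_X * (sat_gf 1 * sat_gf 4 + sat_gf 2 * sat_gf 3
      + sat_gf 3 * sat_gf 2 + sat_gf 4 * sat_gf 1 + sat_gf 5 * sat_gf 0)"
    by (subst sat_gf_rec[of 5]) (simp_all add: numeral_eq_Suc sum.atLeast_Suc_atMost)
  then show ?thesis
    using fps_X_mult_geom
    unfolding sat_gf_1 sat_gf_2 sat_gf_3 sat_gf_4 sat_cov_gf_4 sat_cov_gf_3 sat_gf_no_free by algebra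
qed

lemma sat_cov_gf_5: "sat_cov_gf 5 = 14 * geom ^ 9 - 21 * geom ^ 8 - geom ^ 7 - 6 * geom ^ 6 + 12 * geom ^ 5
    + 18 * geom ^ 4 - geom ^ 3 - 30 * geom ^ 2 + 16 * geom - 1"
proof -
  have "sat_cov_gf 5 = fps_X * (sat_gf 1 * sat_cov_gf 4 + sat_gf 2 * sat_cov_gf 3 + sat_gf 3 * sat_cov_gf 2
      + sat_gf 4 * sat_cov_gf 1 + sat_gf 5 * sat_cov_gf 0)"
    by (subst sat_cov_gf_rec[of 5]) (simp_all add: numeral_eq_Suc sum.atLeast_Suc_atMost)
  then show ?thesis
    using fps_X_mult_geom
    unfolding sat_gf_1 sat_gf_2 sat_gf_3 sat_gf_4 sat_gf_5 sat_cov_gf_1 sat_cov_gf_2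
      sat_cov_gf_3 sat_cov_gf_4 sat_cov_gf_no_free by algebra
qed

lemma sat_gf_6: "sat_gf 6 = 42 * geom ^ 11 - 84 * geom ^ 10 + 56 * geom ^ 9 - 49 * geom ^ 8 + 31 * geom ^ 7
    + 15 * geom ^ 6 + 6 * geom ^ 5 - 12 * geom ^ 4 - 13 * geom ^ 3 + 8 * geom ^ 2"
proof -
  have "sat_gf 6 = sat_cov_gf 5 + sat_cov_gf 4 + fps_X * (sat_gf 1 * sat_gf 5 + sat_gf 2 * sat_gf 4
      + sat_gf 3 * sat_gf 3 + sat_gf 4 * sat_gf 2 + sat_gf 5 * sat_gf 1 + sat_gf 6 * sat_gf 0)"
    by (subst sat_gf_rec[of 6]) (simp_all add: numeral_eq_Suc sum.atLeast_Suc_atMost)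
  then show ?thesis
    using fps_X_mult_geom
    unfolding sat_gf_1 sat_gf_2 sat_gf_3 sat_gf_4 sat_gf_5 sat_cov_gf_5 sat_cov_gf_4
      sat_gf_no_free by algebra
qed

lemma LO_eq_num_sat:
  assumes n: "n = u + 2 * m" and u: "u = 2 * k + 1 \<or> u = 2 * k + 2"
  shows "LO k n = num_sat u m"
proof -
  have half: "(n - 1) div 2 = k + m"
    using n u by presburger
  have hi: "1 + u + 2 * m = Suc n"
    using n u by linarith
  have "{A. saturated2 n A \<and> card A + k = (n - 1) div 2} = sat_stacks False 1 u m"
    unfolding sat_stacks_def saturated2_iff_saturated hi half by simp
  then show ?thesis
    unfolding LO_def num_sat_def using card_sat_stacks_shift[of False 1 u m] by simp
qed

lemma LO_eq_0:
  assumes "(n - 1) div 2 < k"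
  shows "LO k n = 0"
proof -
  have "{A. saturated2 n A \<and> card A + k = (n - 1) div 2} = {}"
    using assms by auto
  then show ?thesis
    unfolding LO_def by (simp only: card.empty)
qed

lemma LO_1_odd:
  assumes "odd n" "3 \<le> n"
  shows "real (LO 1 n) = (real n - 1) * (real n - 3) / 192 * ((real n)^2 + 8 * real n + 31)"
proof -
  define m where "m = (n - 3) div 2"
  have n: "n = 3 + 2 * m"
    using assms unfolding m_def by presburger
  have "LO 1 n = num_sat 3 m"
    using n by (intro LO_eq_num_sat) simp_all
  then have "real (LO 1 n) = sat_gf 3 $ m"
    by (simp add: sat_gf_def)
  also have "\<dots> = 2 * real ((m + 4) choose 4) - real ((m + 3) choose 3) - real ((m + 1) choose 1)"
    unfolding sat_gf_3 by (simp add: fps_numeral_fps_const geom_power_numeral_nth)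
  also have "\<dots> = (real n - 1) * (real n - 3) / 192 * ((real n)^2 + 8 * real n + 31)"
    using n
    by (simp add: binomial_gbinomial gbinomial_pochhammer' pochhammer_prod numeral_eq_Suc
        prod.atLeast0_lessThan_Suc)
      (simp add: field_simps)
  finally show ?thesis .
qed

lemma LO_1_even:
  assumes "even n" "3 \<le> n"
  shows "real (LO 1 n) = (real n - 2) * (real n - 4) / 9216 *
    ((real n)^4 + 12 * (real n)^3 + 68 * (real n)^2 - 288 * real n - 2304)"
proof -
  define m where "m = (n - 4) div 2"
  have n: "n = 4 + 2 * m"
    using assms unfolding m_def by presburger
  have "LO 1 n = num_sat 4 m"
    using n by (intro LO_eq_num_sat) simp_all
  then have "real (LO 1 n) = sat_gf 4 $ m"
    by (simp add: sat_gf_def)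
  also have "\<dots> = 5 * real ((m + 6) choose 6) - 5 * real ((m + 5) choose 5) + real ((m + 4) choose 4)
      - 3 * real ((m + 3) choose 3) + 2 * real ((m + 1) choose 1)"
    unfolding sat_gf_4 by (simp add: fps_numeral_fps_const geom_power_numeral_nth)
  also have "\<dots> = (real n - 2) * (real n - 4) / 9216 *
      ((real n)^4 + 12 * (real n)^3 + 68 * (real n)^2 - 288 * real n - 2304)"
    using n
    by (simp add: binomial_gbinomial gbinomial_pochhammer' pochhammer_prod numeral_eq_Suc
        prod.atLeast0_lessThan_Suc)
      (simp add: field_simps)
  finally show ?thesis .
qed

lemma LO_2_odd:
  assumes "odd n" "3 \<le> n"
  shows "real (LO 2 n) = (real n - 3) * (real n - 5) * (real n - 7) / 737280 *
    ((real n)^5 + 23 * (real n)^4 + 278 * (real n)^3 + 634 * (real n)^2 - 9879 * real n - 52497)"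
proof (cases "n = 3")
  case True
  then show ?thesis
    by (simp add: LO_eq_0)
next
  case False
  define m where "m = (n - 5) div 2"
  have n: "n = 5 + 2 * m"
    using assms False unfolding m_def by presburger
  have "LO 2 n = num_sat 5 m"
    using n by (intro LO_eq_num_sat) simp_all
  then have "real (LO 2 n) = sat_gf 5 $ m"
    by (simp add: sat_gf_def)
  also have "\<dots> = 14 * real ((m + 8) choose 8) - 21 * real ((m + 7) choose 7) + 9 * real ((m + 6) choose 6)
      - 11 * real ((m + 5) choose 5) + 4 * real ((m + 4) choose 4) + 6 * real ((m + 3) choose 3)
      + 3 * real ((m + 2) choose 2) - 4 * real ((m + 1) choose 1)"
    unfolding sat_gf_5 by (simp add: fps_numeral_fps_const geom_power_numeral_nth)
  also have "\<dots> = (real n - 3) * (real n - 5) * (real n - 7) / 737280 *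
      ((real n)^5 + 23 * (real n)^4 + 278 * (real n)^3 + 634 * (real n)^2 - 9879 * real n - 52497)"
    using n
    by (simp add: binomial_gbinomial gbinomial_pochhammer' pochhammer_prod numeral_eq_Suc
        prod.atLeast0_lessThan_Suc)
      (simp add: field_simps)
  finally show ?thesis .
qed

lemma LO_2_even:
  assumes "even n" "3 \<le> n"
  shows "real (LO 2 n) = (real n - 4) * (real n - 6) * (real n - 8) / 88473600 *
    ((real n)^7 + 28 * (real n)^6 + 400 * (real n)^5 - 560 * (real n)^4
     - 56336 * (real n)^3 - 320768 * (real n)^2 + 1555200 * real n + 13363200)"
proof (cases "n = 4")
  case True
  then show ?thesis
    by (simp add: LO_eq_0)
next
  case False
  define m where "m = (n - 6) div 2"
  have n: "n = 6 + 2 * m"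
    using assms False unfolding m_def by presburger
  have "LO 2 n = num_sat 6 m"
    using n by (intro LO_eq_num_sat) simp_all
  then have "real (LO 2 n) = sat_gf 6 $ m"
    by (simp add: sat_gf_def)
  also have "\<dots> = 42 * real ((m + 10) choose 10) - 84 * real ((m + 9) choose 9)
      + 56 * real ((m + 8) choose 8) - 49 * real ((m + 7) choose 7) + 31 * real ((m + 6) choose 6)
      + 15 * real ((m + 5) choose 5) + 6 * real ((m + 4) choose 4) - 12 * real ((m + 3) choose 3)
      - 13 * real ((m + 2) choose 2) + 8 * real ((m + 1) choose 1)"
    unfolding sat_gf_6 by (simp add: fps_numeral_fps_const geom_power_numeral_nth)
  also have "\<dots> = (real n - 4) * (real n - 6) * (real n - 8) / 88473600 *
      ((real n)^7 + 28 * (real n)^6 + 400 * (real n)^5 - 560 * (real n)^4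
       - 56336 * (real n)^3 - 320768 * (real n)^2 + 1555200 * real n + 13363200)"
    using n
    by (simp add: binomial_gbinomial gbinomial_pochhammer' pochhammer_prod numeral_eq_Suc
        prod.atLeast0_lessThan_Suc)
      (simp add: field_simps)
  finally show ?thesis .
qed

theorem corollary5:
  fixes n :: nat
  assumes "n \<ge> 3"
  shows "real (LO 1 n) =
           (if odd n then (real n - 1) * (real n - 3) / 192 * ((real n)^2 + 8 * real n + 31)
            else (real n - 2) * (real n - 4) / 9216 *
                 ((real n)^4 + 12 * (real n)^3 + 68 * (real n)^2 - 288 * real n - 2304))
       \<and> real (LO 2 n) =
           (if odd n then (real n - 3) * (real n - 5) * (real n - 7) / 737280 *
                 ((real n)^5 + 23 * (real n)^4 + 278 * (real n)^3 + 634 * (real n)^2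
                  - 9879 * real n - 52497)
            else (real n - 4) * (real n - 6) * (real n - 8) / 88473600 *
                 ((real n)^7 + 28 * (real n)^6 + 400 * (real n)^5 - 560 * (real n)^4
                  - 56336 * (real n)^3 - 320768 * (real n)^2 + 1555200 * real n + 13363200))"
proof (cases "odd n")
  case True
  show ?thesis
    unfolding if_P[OF True] using LO_1_odd[OF True assms] LO_2_odd[OF True assms] ..
next
  case False
  then have "even n" by simp
  show ?thesis
    unfolding if_not_P[OF False] using LO_1_even[OF \<open>even n\<close> assms] LO_2_even[OF \<open>even n\<close> assms] ..
qed

end
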